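(* Let $\mu \in \mathcal{X}$ and let $P_X$ be a probability distribution on $\mathcal{X}$. (i) If $D(\mu ; P_X) = 0$ then $D_L(\mu ; P_X) = 0$. (ii) If $D(\mu ; P_X) = 2$ then $D_L(\mu ; P_X) = 1$.
   Context: $(\mathcal{X}, d)$ is a complete separable metric space with its Borel $\sigma$-algebra. Define $h: \mathcal{X}^3 \to \mathbb{R}$ by $h(x_1, x_2, x_3) := \mathbb{I}( x_3 \notin \{x_1, x_2\} ) \dfrac{ d^2(x_1, x_3) + d^2(x_2, x_3) - d^2(x_1, x_2) }{d(x_1, x_3)\, d(x_2, x_3) }$, where $h := 0$ when $x_3 \in \{x_1,x_2\}$. The metric spatial depth of $\mu \in \mathcal{X}$ with respect to a probability distribution $P_X$ on $\mathcal{X}$ is $D(\mu; P_X) := 1 - \frac{1}{2} \mathrm{E} \{ h(X_1, X_2, \mu) \}$, where $X_1, X_2 \sim P_X$ are independent. The metric lens depth is $D_L(\mu ; P_X) := P[ d(X_1, X_2) \geq \max \{ d( X_1, \mu), d( X_2, \mu) \} ]$ with $X_1, X_2 \sim P_X$ independent. *)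

theory Defs
  imports "HOL-Probability.Probability"
begin

definition hker :: "'a::metric_space \<Rightarrow> 'a \<Rightarrow> 'a \<Rightarrow> real" where
  "hker x1 x2 x3 = (if x3 \<notin> {x1, x2} then
      ((dist x1 x3)\<^sup>2 + (dist x2 x3)\<^sup>2 - (dist x1 x2)\<^sup>2) / (dist x1 x3 * dist x2 x3)
    else 0)"

definition spatial_depth :: "'a::metric_space \<Rightarrow> 'a measure \<Rightarrow> real" where
  "spatial_depth mu P = 1 - (1/2) * (\<integral>z. hker (fst z) (snd z) mu \<partial>(P \<Otimes>\<^sub>M P))"

definition lens_depth :: "'a::metric_space \<Rightarrow> 'a measure \<Rightarrow> real" where
  "lens_depth mu P = measure (P \<Otimes>\<^sub>M P)
     {z \<in> space (P \<Otimes>\<^sub>M P). dist (fst z) (snd z) \<ge> max (dist (fst z) mu) (dist (snd z) mu)}"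

end

theory Submission
  imports Defs
begin

text \<open>By the law of cosines, h(x1, x2, mu) is twice the cosine of the angle at mu of the
  triangle x1 x2 mu, and the triangle inequality gives exactly the bounds -2 \<le> h \<le> 2 in any
  metric space. The bound 2 is only attained for degenerate triangles with
  d(x1,x2) = |d(x1,mu) - d(x2,mu)|, which are never lenses, and the bound -2 only when
  d(x1,x2) = d(x1,mu) + d(x2,mu), which always are. If D = 0 (resp. D = 2), the expectation
  of h sits at its sure upper (resp. lower) bound, so h equals that bound almost surely, and
  the lens event has probability 0 (resp. 1).\<close>

lemma triangle_cosine_ratio_bounds:
  fixes a b c :: real
  assumes "a > 0" "b > 0" "\<bar>a - b\<bar> \<le> c" "c \<le> a + b"
  shows "-2 \<le> (a\<^sup>2 + b\<^sup>2 - c\<^sup>2) / (a * b)" "(a\<^sup>2 + b\<^sup>2 - c\<^sup>2) / (a * b) \<le> 2"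
    and "(a\<^sup>2 + b\<^sup>2 - c\<^sup>2) / (a * b) = 2 \<Longrightarrow> c = \<bar>a - b\<bar>"
    and "(a\<^sup>2 + b\<^sup>2 - c\<^sup>2) / (a * b) = -2 \<Longrightarrow> c = a + b"
proof -
  have ab: "a * b > 0" using assms by simp
  have c0: "c \<ge> 0" using assms(3) by linarith
  have sq_lower: "(a - b)\<^sup>2 \<le> c\<^sup>2"
    using assms(3) by (metis abs_ge_zero power2_abs power_mono)
  have sq_upper: "c\<^sup>2 \<le> (a + b)\<^sup>2"
    using assms(4) c0 by (intro power_mono) auto
  show "-2 \<le> (a\<^sup>2 + b\<^sup>2 - c\<^sup>2) / (a * b)"
    using sq_upper ab by (simp add: le_divide_eq power2_eq_square algebra_simps)
  show "(a\<^sup>2 + b\<^sup>2 - c\<^sup>2) / (a * b) \<le> 2"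
    using sq_lower ab by (simp add: divide_le_eq power2_eq_square algebra_simps)
  show "c = \<bar>a - b\<bar>" if "(a\<^sup>2 + b\<^sup>2 - c\<^sup>2) / (a * b) = 2"
  proof -
    have "c\<^sup>2 = (a - b)\<^sup>2"
      using that assms(1,2) by (simp add: divide_eq_eq power2_eq_square algebra_simps)
    then show ?thesis using c0 by (metis abs_ge_zero power2_abs power2_eq_iff_nonneg)
  qed
  show "c = a + b" if "(a\<^sup>2 + b\<^sup>2 - c\<^sup>2) / (a * b) = -2"
  proof -
    have "c\<^sup>2 = (a + b)\<^sup>2"
      using that assms(1,2) by (simp add: divide_eq_eq power2_eq_square algebra_simps)
    then show ?thesis using c0 assms(1,2) by (simp add: power2_eq_iff_nonneg)
  qed
qed

lemma hker_triangle:
  fixes x y m :: "'a::metric_space"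
  assumes "m \<notin> {x, y}"
  shows "dist x m > 0" "dist y m > 0"
    and "\<bar>dist x m - dist y m\<bar> \<le> dist x y" "dist x y \<le> dist x m + dist y m"
    and "hker x y m = ((dist x m)\<^sup>2 + (dist y m)\<^sup>2 - (dist x y)\<^sup>2) / (dist x m * dist y m)"
  using assms abs_dist_diff_le[of x m y] dist_triangle2[of x y m]
  by (auto simp: hker_def dist_commute[of m])

lemma abs_hker_le: "\<bar>hker x y m\<bar> \<le> 2"
proof (cases "m \<in> {x, y}")
  case False
  note triangle = hker_triangle[OF False]
  show ?thesis
    using triangle_cosine_ratio_bounds(1,2)[OF triangle(1-4)] by (simp add: triangle(5) abs_le_iff)
qed (simp add: hker_def)

lemma hker_eq_2_imp_not_lens:
  assumes "hker x y m = 2"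
  shows "dist x y < max (dist x m) (dist y m)"
proof -
  have "m \<notin> {x, y}" using assms by (auto simp: hker_def)
  note triangle = hker_triangle[OF this]
  have "dist x y = \<bar>dist x m - dist y m\<bar>"
    using assms triangle(5) by (intro triangle_cosine_ratio_bounds(3)[OF triangle(1-4)]) simp
  then show ?thesis using triangle(1,2) by linarith
qed

lemma hker_eq_minus_2_imp_lens:
  assumes "hker x y m = -2"
  shows "max (dist x m) (dist y m) \<le> dist x y"
proof -
  have "m \<notin> {x, y}" using assms by (auto simp: hker_def)
  note triangle = hker_triangle[OF this]
  have "dist x y = dist x m + dist y m"
    using assms triangle(5) by (intro triangle_cosine_ratio_bounds(4)[OF triangle(1-4)]) simp
  then show ?thesis using triangle(1,2) by linarith
qed

lemma (in prob_space) AE_eq_upper_bound_if_expectation_eq: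
  fixes f :: "'a \<Rightarrow> real"
  assumes "integrable M f" "\<And>x. x \<in> space M \<Longrightarrow> f x \<le> c" "expectation f = c"
  shows "AE x in M. f x = c"
proof -
  have "(\<integral>x. c - f x \<partial>M) = 0"
    using assms(1,3) by (simp add: prob_space)
  then have "AE x in M. c - f x = 0"
    using assms by (subst integral_nonneg_eq_0_iff_AE[symmetric]) auto
  then show ?thesis by eventually_elim simp
qed

lemma (in prob_space) AE_eq_lower_bound_if_expectation_eq:
  fixes f :: "'a \<Rightarrow> real"
  assumes "integrable M f" "\<And>x. x \<in> space M \<Longrightarrow> c \<le> f x" "expectation f = c"
  shows "AE x in M. f x = c"
  using AE_eq_upper_bound_if_expectation_eq[of "\<lambda>x. - f x" "- c"] assms by simp

lemma
  fixes mu :: "'a::{metric_space, second_countable_topology}"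
  assumes "sets P = sets borel"
  shows borel_measurable_hker_pair: "(\<lambda>z. hker (fst z) (snd z) mu) \<in> borel_measurable (P \<Otimes>\<^sub>M P)"
    and sets_lens_pair: "{z \<in> space (P \<Otimes>\<^sub>M P).
      max (dist (fst z) mu) (dist (snd z) mu) \<le> dist (fst z) (snd z)} \<in> sets (P \<Otimes>\<^sub>M P)"
proof -
  have sets_pair: "sets (P \<Otimes>\<^sub>M P) = sets (borel :: ('a \<times> 'a) measure)"
    by (metis assms borel_prod sets_pair_measure_cong)
  have [measurable]: "(\<lambda>z::'a \<times> 'a. dist (fst z) mu) \<in> borel_measurable borel"
    "(\<lambda>z::'a \<times> 'a. dist (snd z) mu) \<in> borel_measurable borel"
    "(\<lambda>z::'a \<times> 'a. dist (fst z) (snd z)) \<in> borel_measurable borel"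
    by (intro borel_measurable_continuous_onI continuous_intros)+
  have [measurable]: "{z::'a \<times> 'a \<in> space borel. mu \<notin> {fst z, snd z}} \<in> sets borel"
    by (simp add: borel_open open_Collect_conj open_Collect_neq continuous_intros)
  have "(\<lambda>z::'a \<times> 'a. hker (fst z) (snd z) mu) \<in> borel_measurable borel"
    unfolding hker_def by measurable
  then show "(\<lambda>z. hker (fst z) (snd z) mu) \<in> borel_measurable (P \<Otimes>\<^sub>M P)"
    using measurable_cong_sets[OF sets_pair refl] by metis
  have "{z::'a \<times> 'a \<in> space borel.
      max (dist (fst z) mu) (dist (snd z) mu) \<le> dist (fst z) (snd z)} \<in> sets borel"
    by measurable
  then show "{z \<in> space (P \<Otimes>\<^sub>M P).
      max (dist (fst z) mu) (dist (snd z) mu) \<le> dist (fst z) (snd z)} \<in> sets (P \<Otimes>\<^sub>M P)"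
    using sets_pair sets_eq_imp_space_eq[OF sets_pair] by simp
qed

theorem corollary1:
  fixes mu :: "'a::polish_space" and P :: "'a measure"
  assumes "prob_space P" and "sets P = sets borel"
  shows "(spatial_depth mu P = 0 \<longrightarrow> lens_depth mu P = 0)
       \<and> (spatial_depth mu P = 2 \<longrightarrow> lens_depth mu P = 1)"
proof -
  let ?h = "\<lambda>z. hker (fst z) (snd z) mu"
  interpret PP: prob_space "P \<Otimes>\<^sub>M P"
    by (intro prob_space_pair assms(1))
  have h_bounds: "-2 \<le> ?h z" "?h z \<le> 2" for z
    using abs_hker_le[of "fst z" "snd z" mu] by auto
  have integrable: "integrable (P \<Otimes>\<^sub>M P) ?h"
    using abs_hker_le
    by (intro PP.integrable_const_bound[where B = 2] AE_I2
        borel_measurable_hker_pair[OF assms(2)]) simp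
  note lens = sets_lens_pair[OF assms(2), of mu]
  have "lens_depth mu P = 0" if "spatial_depth mu P = 0"
  proof -
    have "AE z in P \<Otimes>\<^sub>M P. ?h z = 2"
      using that integrable h_bounds
      by (intro PP.AE_eq_upper_bound_if_expectation_eq) (auto simp: spatial_depth_def)
    then show ?thesis
      unfolding lens_depth_def using PP.prob_Collect_eq_0[OF lens]
      by (auto elim!: AE_mp dest!: hker_eq_2_imp_not_lens)
  qed
  moreover have "lens_depth mu P = 1" if "spatial_depth mu P = 2"
  proof -
    have "AE z in P \<Otimes>\<^sub>M P. ?h z = -2"
      using that integrable h_bounds
      by (intro PP.AE_eq_lower_bound_if_expectation_eq) (auto simp: spatial_depth_def)
    then show ?thesis
      unfolding lens_depth_def using PP.prob_Collect_eq_1[OF lens]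
      by (auto elim!: AE_mp dest!: hker_eq_minus_2_imp_lens)
  qed
  ultimately show ?thesis by blast
qed

end
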